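(* Let $\mathcal G$ be an MMPG arena. (i) Let $(\sigma,\gamma)$ be a well-behaved perfectly-incentivised strategy profile that is an incentive strategy profile; let $Q$ be the set of vertices occurring on $\pi_\sigma$, $S$ the set of vertices occurring infinitely often on $\pi_\sigma$, $p_e$ the limit frequency of each edge $e$ on $\pi_\sigma$, $p_v=\sum_{(v,w)\in E}p_{(v,w)}$ for $v\in V$, and $\gamma_p$ the constant incentive of follower $p$ along $\pi_\sigma$. Then $((p_v)_{v},(p_e)_{e},(\gamma_p)_{p})$ satisfies $\mathrm{LP}(Q,S)$. (ii) Conversely, let $(\sigma,\gamma)$ be any pair of a well-behaved strategy profile and an incentive profile, let $Q,S,p_e,p_v$ be defined from $\pi_\sigma$ as in (i), and suppose $((p_v),(p_e),(\gamma_p(\sigma))_p)$ satisfies $\mathrm{LP}(Q,S)$. Then the perfectly-incentivised strategy profile $(\sigma^*,\gamma^* )$ with $\pi_{\sigma^*}=\pi_\sigma$ and constant incentive $\gamma_p(\sigma)$ for each follower $p$ along the play is an incentive strategy profile.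
   Context: A multi-player mean-payoff game (MMPG) arena is a tuple $\mathcal G=(P,V,(V_p)_{p\in P},v_0,E,(r_p)_{p\in P})$ where $P$ is a finite set of players containing a distinguished leader $l\in P$ (the other players are called followers), $V$ is a finite set of vertices with initial vertex $v_0\in V$, $(V_p)_{p\in P}$ is a partition of $V$ (player $p$ owns $V_p$), $E\subseteq V\times V$ is an edge set such that every vertex has at least one successor, and $r_p:E\to\mathbb Q$ is the reward function of player $p$. A history is a finite sequence $h=v_0v_1\dots v_n$ starting at $v_0$ with $(v_i,v_{i+1})\in E$ for all $i<n$; $\mathsf{last}(h)=v_n$. A play is an infinite such sequence. A strategy of player $p$ is a function $\sigma_p$ assigning to every history $h$ with $\mathsf{last}(h)\in V_p$ a vertex $v$ with $(\mathsf{last}(h),v)\in E$. A strategy profile $\sigma=(\sigma_p)_{p\in P}$ determines a unique play $\pi_\sigma$. The raw payoff of player $p$ on a play $\pi=v_0v_1\dots$ is $r_p(\pi)=\liminf_{n\to\infty}\frac1n\sum_{i=0}^{n-1}r_p((v_i,v_{i+1}))$, and $r_p(\sigma):=r_p(\pi_\sigma)$. For a profile $\sigma$, a player $p$ and a strategy $\sigma'$ of $p$, $\sigma_{p,\sigma'}$ denotes the profile obtained from $\sigma$ by replacing $p$'s strategy with $\sigma'$. An incentive for a follower $p$ is a function $\gamma_p$ from histories to $\mathbb R_{\ge 0}$; its value on a play $\pi=v_0v_1\dots$ is $\gamma_p(\pi)=\liminf_{n\to\infty}\frac1n\sum_{i=1}^{n}\gamma_p(v_0\dots v_i)$, and $\gamma_p(\sigma):=\gamma_p(\pi_\sigma)$.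 An incentive profile is $\gamma=(\gamma_p)_{p\in P\setminus\{l\}}$. A pair $(\sigma,\gamma)$ is an incentive strategy profile (ISP) if for every follower $p$ and every strategy $\sigma'$ of $p$: $r_p(\sigma)+\gamma_p(\sigma)\ge r_p(\sigma_{p,\sigma'})+\gamma_p(\sigma_{p,\sigma'})$. For a follower $p$, $\mathcal G_p$ is the two-player zero-sum mean-payoff game on the graph $(V,E)$ from any start vertex, in which player $p$ controls $V_p$ and maximises the liminf-average of $r_p$, while a coalition of all other players (including the leader) controls $V\setminus V_p$ and minimises it. Such games are determined with optimal memoryless strategies for both sides; $\mathrm{val}_p(v)$ denotes the value of $\mathcal G_p$ from vertex $v$. Fix, for each follower $p$, optimal memoryless strategies of both sides in $\mathcal G_p$. Let $r_{\max}=\max_{p\in P,e\in E}r_p(e)$. A history $h$ is deviating for a profile $\sigma$ if it is not a prefix of $\pi_\sigma$; then $\mathsf{dev}(h,\sigma)$ denotes the owner of $v_i$ for the largest $i$ such that $v_0\dots v_i$ is a prefix of $h$ and $v_{i+1}\ne\sigma(v_0\dots v_i)$ (the most recent player to have deviated from $\sigma$). A perfectly-incentivised strategy profile (PSP) is a pair $(\sigma,\gamma)$ such that: (i) for every follower $p$, $\gamma_p$ is constant on the prefixes of $\pi_\sigma$ (this constant is also denoted $\gamma_p$); (ii) on every deviating history $h$ with $p=\mathsf{dev}(h,\sigma)$, $v=\mathsf{last}(h)$ owned by $p'$, the move $\sigma_{p'}(h)=v'$ is the move prescribed at $v$ by the fixed optimal memoryless strategy in $\mathcal G_p$ (of $p$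 if $p'=p$, of the coalition otherwise); (iii) on deviating histories incentives are $0$, except that if in (ii) $p'$ is a follower and $p'\ne p$, then $\gamma_{p'}(h\cdot v')=r_{\max}+1-r_{p'}((v,v'))$. A PSP is determined by its play and its constant incentives along the play. The limit frequency of an edge $e$ on a play $\pi=v_0v_1\dots$ is $\lim_{n\to\infty}\frac1n|\{i<n:(v_i,v_{i+1})=e\}|$ when this limit exists. A strategy profile $\sigma$ is well-behaved if every edge has a limit frequency on $\pi_\sigma$. For sets $S\subseteq Q\subseteq V$, the constraint system $\mathrm{LP}(Q,S)$ over real variables $p_v$ ($v\in V$), $p_e$ ($e\in E$), $\gamma_p$ ($p\in P\setminus\{l\}$) consists of: (1) $p_v=0$ for $v\notin S$ and $p_v\ge0$ for $v\in S$; (2) $p_e=0$ for $e\in E\setminus(S\times S)$ and $p_e\ge 0$ for $e\in E\cap(S\times S)$; (3) $\sum_{v\in V}p_v=1$; (4) $p_s=\sum_{(s,t)\in E}p_{(s,t)}$ for all $s\in S$ and $p_t=\sum_{(s,t)\in E}p_{(s,t)}$ for all $t\in S$; (5) $\gamma_p\ge 0$ and $\gamma_p+\sum_{e\in E}p_e r_p(e)\ge\max_{v\in Q}\mathrm{val}_p(v)$ for every follower $p$. Its objective is to maximise $\sum_{e\in E}p_e r_l(e)-\sum_{p\in P\setminus\{l\}}\gamma_p$. *)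

theory Defs
  imports "HOL-Analysis.Analysis"
begin

text \<open>Multi-player mean-payoff game arenas. The partition (V_p) is given by an owner function.\<close>

record ('p, 'v) arena =
  players :: "'p set"
  leader :: 'p
  verts :: "'v set"
  init :: 'v
  owner :: "'v \<Rightarrow> 'p"
  edges :: "('v \<times> 'v) set"
  rew :: "'p \<Rightarrow> 'v \<times> 'v \<Rightarrow> real"

definition mmpg_arena :: "('p, 'v) arena \<Rightarrow> bool" where
  "mmpg_arena G \<longleftrightarrow> finite (players G) \<and> leader G \<in> players G \<and> finite (verts G)
     \<and> init G \<in> verts G \<and> (\<forall>v\<in>verts G. owner G v \<in> players G)
     \<and> edges G \<subseteq> verts G \<times> verts G \<and> (\<forall>v\<in>verts G. \<exists>w. (v, w) \<in> edges G)
     \<and> (\<forall>p\<in>players G. \<forall>e\<in>edges G. rew G p e \<in> \<rat>)"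

definition followers :: "('p, 'v) arena \<Rightarrow> 'p set" where
  "followers G = players G - {leader G}"

definition rmax :: "('p, 'v) arena \<Rightarrow> real" where
  "rmax G = Max {rew G p e | p e. p \<in> players G \<and> e \<in> edges G}"

text \<open>Histories are nonempty vertex lists; the history of a profile (a single function on
  histories, whose value at h is the move of the owner of last h) from a start vertex.\<close>

definition is_hist_from :: "('p, 'v) arena \<Rightarrow> 'v \<Rightarrow> 'v list \<Rightarrow> bool" where
  "is_hist_from G v h \<longleftrightarrow> h \<noteq> [] \<and> hd h = v \<and>
     (\<forall>i. Suc i < length h \<longrightarrow> (h ! i, h ! Suc i) \<in> edges G)"

abbreviation is_hist :: "('p, 'v) arena \<Rightarrow> 'v list \<Rightarrow> bool" where
  "is_hist G h \<equiv> is_hist_from G (init G) h"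

fun hist :: "('v list \<Rightarrow> 'v) \<Rightarrow> 'v \<Rightarrow> nat \<Rightarrow> 'v list" where
  "hist \<sigma> v 0 = [v]"
| "hist \<sigma> v (Suc n) = hist \<sigma> v n @ [\<sigma> (hist \<sigma> v n)]"

definition play :: "('v list \<Rightarrow> 'v) \<Rightarrow> 'v \<Rightarrow> nat \<Rightarrow> 'v" where
  "play \<sigma> v n = last (hist \<sigma> v n)"

definition valid_for :: "('p, 'v) arena \<Rightarrow> 'p set \<Rightarrow> ('v list \<Rightarrow> 'v) \<Rightarrow> bool" where
  "valid_for G Ps s \<longleftrightarrow> (\<forall>h. h \<noteq> [] \<longrightarrow> last h \<in> verts G \<longrightarrow> owner G (last h) \<in> Ps
      \<longrightarrow> (last h, s h) \<in> edges G)"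

definition valid_profile :: "('p, 'v) arena \<Rightarrow> ('v list \<Rightarrow> 'v) \<Rightarrow> bool" where
  "valid_profile G \<sigma> = valid_for G UNIV \<sigma>"

text \<open>Profile in which the vertices of player p use s1 and all other vertices use s2
  (so \<sigma>_{p,\<sigma>'} is combine G p \<sigma>' \<sigma>).\<close>

definition combine :: "('p, 'v) arena \<Rightarrow> 'p \<Rightarrow> ('v list \<Rightarrow> 'v) \<Rightarrow> ('v list \<Rightarrow> 'v) \<Rightarrow> 'v list \<Rightarrow> 'v" where
  "combine G p s1 s2 = (\<lambda>h. if owner G (last h) = p then s1 h else s2 h)"

definition mean_payoff :: "('v \<times> 'v \<Rightarrow> real) \<Rightarrow> (nat \<Rightarrow> 'v) \<Rightarrow> ereal" where
  "mean_payoff w \<pi> = liminf (\<lambda>n. ereal ((\<Sum>i<n. w (\<pi> i, \<pi> (Suc i))) / real n))"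

definition payoff :: "('p, 'v) arena \<Rightarrow> 'p \<Rightarrow> ('v list \<Rightarrow> 'v) \<Rightarrow> ereal" where
  "payoff G p \<sigma> = mean_payoff (rew G p) (play \<sigma> (init G))"

definition incentive_profile :: "('p, 'v) arena \<Rightarrow> ('p \<Rightarrow> 'v list \<Rightarrow> real) \<Rightarrow> bool" where
  "incentive_profile G \<gamma> \<longleftrightarrow> (\<forall>p\<in>followers G. \<forall>h. is_hist G h \<longrightarrow> \<gamma> p h \<ge> 0)"

definition inc_value :: "('p, 'v) arena \<Rightarrow> ('p \<Rightarrow> 'v list \<Rightarrow> real) \<Rightarrow> 'p \<Rightarrow> ('v list \<Rightarrow> 'v) \<Rightarrow> ereal" where
  "inc_value G \<gamma> p \<sigma> =
     liminf (\<lambda>n. ereal ((\<Sum>i\<in>{1..n}. \<gamma> p (hist \<sigma> (init G) i)) / real n))"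

definition is_isp :: "('p, 'v) arena \<Rightarrow> ('v list \<Rightarrow> 'v) \<Rightarrow> ('p \<Rightarrow> 'v list \<Rightarrow> real) \<Rightarrow> bool" where
  "is_isp G \<sigma> \<gamma> \<longleftrightarrow> (\<forall>p\<in>followers G. \<forall>\<sigma>'. valid_for G {p} \<sigma>' \<longrightarrow>
      payoff G p \<sigma> + inc_value G \<gamma> p \<sigma>
        \<ge> payoff G p (combine G p \<sigma>' \<sigma>) + inc_value G \<gamma> p (combine G p \<sigma>' \<sigma>))"

definition game_val :: "('p, 'v) arena \<Rightarrow> 'p \<Rightarrow> 'v \<Rightarrow> ereal" where
  "game_val G p v = (SUP s1\<in>{s. valid_for G {p} s}. INF s2\<in>{s. valid_for G (- {p}) s}.
      mean_payoff (rew G p) (play (combine G p s1 s2) v))"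

definition opt_max :: "('p, 'v) arena \<Rightarrow> 'p \<Rightarrow> ('v \<Rightarrow> 'v) \<Rightarrow> bool" where
  "opt_max G p \<tau> \<longleftrightarrow> valid_for G {p} (\<lambda>h. \<tau> (last h)) \<and>
     (\<forall>v\<in>verts G. \<forall>s2. valid_for G (- {p}) s2 \<longrightarrow>
        mean_payoff (rew G p) (play (combine G p (\<lambda>h. \<tau> (last h)) s2) v) \<ge> game_val G p v)"

definition opt_min :: "('p, 'v) arena \<Rightarrow> 'p \<Rightarrow> ('v \<Rightarrow> 'v) \<Rightarrow> bool" where
  "opt_min G p \<tau> \<longleftrightarrow> valid_for G (- {p}) (\<lambda>h. \<tau> (last h)) \<and>
     (\<forall>v\<in>verts G. \<forall>s1. valid_for G {p} s1 \<longrightarrow>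
        mean_payoff (rew G p) (play (combine G p s1 (\<lambda>h. \<tau> (last h))) v) \<le> game_val G p v)"

definition deviating :: "('p, 'v) arena \<Rightarrow> ('v list \<Rightarrow> 'v) \<Rightarrow> 'v list \<Rightarrow> bool" where
  "deviating G \<sigma> h \<longleftrightarrow> is_hist G h \<and> h \<noteq> hist \<sigma> (init G) (length h - 1)"

definition dev :: "('p, 'v) arena \<Rightarrow> ('v list \<Rightarrow> 'v) \<Rightarrow> 'v list \<Rightarrow> 'p" where
  "dev G \<sigma> h = owner G (h ! (GREATEST i. Suc i < length h \<and> h ! Suc i \<noteq> \<sigma> (take (Suc i) h)))"

text \<open>Perfectly-incentivised strategy profiles, w.r.t. fixed memoryless strategies
  tmax p (of p) and tmin p (of the coalition) in G_p, for each follower p.\<close>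

definition is_psp :: "('p, 'v) arena \<Rightarrow> ('p \<Rightarrow> 'v \<Rightarrow> 'v) \<Rightarrow> ('p \<Rightarrow> 'v \<Rightarrow> 'v)
    \<Rightarrow> ('v list \<Rightarrow> 'v) \<Rightarrow> ('p \<Rightarrow> 'v list \<Rightarrow> real) \<Rightarrow> bool" where
  "is_psp G tmax tmin \<sigma> \<gamma> \<longleftrightarrow> valid_profile G \<sigma> \<and> incentive_profile G \<gamma> \<and>
     (\<forall>p\<in>followers G. \<forall>n. \<gamma> p (hist \<sigma> (init G) n) = \<gamma> p [init G]) \<and>
     (\<forall>h. deviating G \<sigma> h \<longrightarrow> dev G \<sigma> h \<in> followers G \<longrightarrow>
        \<sigma> h = (if owner G (last h) = dev G \<sigma> h then tmax (dev G \<sigma> h) (last h)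
                else tmin (dev G \<sigma> h) (last h))
      \<and> (\<forall>q\<in>followers G. \<gamma> q h =
           (if 2 \<le> length h \<and> deviating G \<sigma> (butlast h) \<and> last h = \<sigma> (butlast h)
               \<and> owner G (last (butlast h)) = q \<and> q \<noteq> dev G \<sigma> h
            then rmax G + 1 - rew G q (last (butlast h), last h) else 0)))"

definition freq_seq :: "(nat \<Rightarrow> 'v) \<Rightarrow> 'v \<times> 'v \<Rightarrow> nat \<Rightarrow> real" where
  "freq_seq \<pi> e n = real (card {i. i < n \<and> (\<pi> i, \<pi> (Suc i)) = e}) / real n"

definition freq :: "(nat \<Rightarrow> 'v) \<Rightarrow> 'v \<times> 'v \<Rightarrow> real" where
  "freq \<pi> e = lim (freq_seq \<pi> e)"

definition well_behaved :: "('p, 'v) arena \<Rightarrow> ('v list \<Rightarrow> 'v) \<Rightarrow> bool" where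
  "well_behaved G \<sigma> \<longleftrightarrow> (\<forall>e\<in>edges G. convergent (freq_seq (play \<sigma> (init G)) e))"

definition visited :: "(nat \<Rightarrow> 'v) \<Rightarrow> 'v set" where
  "visited \<pi> = range \<pi>"

definition inf_visited :: "(nat \<Rightarrow> 'v) \<Rightarrow> 'v set" where
  "inf_visited \<pi> = {v. \<exists>\<^sub>F n in sequentially. \<pi> n = v}"

definition LP_sat :: "('p, 'v) arena \<Rightarrow> 'v set \<Rightarrow> 'v set
    \<Rightarrow> ('v \<Rightarrow> real) \<Rightarrow> ('v \<times> 'v \<Rightarrow> real) \<Rightarrow> ('p \<Rightarrow> real) \<Rightarrow> bool" where
  "LP_sat G Q S pv pe g \<longleftrightarrow>
     (\<forall>v\<in>verts G. (v \<notin> S \<longrightarrow> pv v = 0) \<and> (v \<in> S \<longrightarrow> pv v \<ge> 0)) \<and>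
     (\<forall>e\<in>edges G. (e \<notin> S \<times> S \<longrightarrow> pe e = 0) \<and> (e \<in> S \<times> S \<longrightarrow> pe e \<ge> 0)) \<and>
     (\<Sum>v\<in>verts G. pv v) = 1 \<and>
     (\<forall>s\<in>S. pv s = (\<Sum>e\<in>{e\<in>edges G. fst e = s}. pe e)) \<and>
     (\<forall>t\<in>S. pv t = (\<Sum>e\<in>{e\<in>edges G. snd e = t}. pe e)) \<and>
     (\<forall>p\<in>followers G. g p \<ge> 0 \<and>
        ereal (g p + (\<Sum>e\<in>edges G. pe e * rew G p e)) \<ge> Max (game_val G p ` Q))"

end

theory Submission
  imports Defs
begin

text \<open>
  The payoff of a well-behaved play is the frequency-weighted sum of edge rewards, and the
  edge frequencies of any play form a circulation of total mass 1 supported on the vertices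
  visited infinitely often; this gives the flow constraints of LP(Q,S).

  (i) If follower p, at any step k, switches to its optimal strategy in G_p, the coalition
  can hold it to no less than val_p(v_k), while its incentive stays nonnegative; so the ISP
  condition yields val_p(v) \<le> r_p + \<gamma>_p for every vertex v on the play.

  (ii) Against a PSP, a deviation of p from the play at a vertex u of Q is answered by the
  coalition's optimal strategy in G_p from u on, and p's incentive is 0 from then on. Since
  mean payoffs ignore finite prefixes, p gets at most val_p(u) \<le> max_Q val_p \<le> r_p + \<gamma>_p.
\<close>

lemma length_hist [simp]: "length (hist s v n) = Suc n"
  by (induction n) auto

lemma hist_not_Nil [simp]: "hist s v n \<noteq> []"
  by (induction n) auto

lemma hd_hist: "hd (hist s v n) = v"
  by (induction n) auto

lemma take_hist: "i \<le> n \<Longrightarrow> take (Suc i) (hist s v n) = hist s v i"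
  by (induction n) (auto simp: le_Suc_eq)

lemma play_0 [simp]: "play s v 0 = v"
  by (simp add: play_def)

lemma play_Suc: "play s v (Suc n) = s (hist s v n)"
  by (simp add: play_def)

lemma nth_hist: "i \<le> n \<Longrightarrow> hist s v n ! i = play s v i"
  by (metis take_hist nth_take lessI play_def last_conv_nth length_hist hist_not_Nil diff_Suc_1)

lemma nth_Suc_hist: "i < n \<Longrightarrow> hist s v n ! Suc i = s (take (Suc i) (hist s v n))"
  by (simp add: nth_hist take_hist play_Suc)

section \<open>Averages and mean payoffs\<close>

lemma bounded_over_n_tendsto_0:
  fixes f :: "nat \<Rightarrow> real"
  assumes "eventually (\<lambda>N. \<bar>f N\<bar> \<le> K) sequentially"
  shows "(\<lambda>N. f N / real N) \<longlonglongrightarrow> 0"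
proof (rule Lim_null_comparison)
  show "eventually (\<lambda>N. norm (f N / real N) \<le> K / real N) sequentially"
    using assms by eventually_elim (simp add: abs_divide divide_right_mono)
qed (rule lim_const_over_n)

lemma liminf_ereal_LIMSEQ:
  fixes f :: "nat \<Rightarrow> real"
  shows "f \<longlonglongrightarrow> L \<Longrightarrow> liminf (\<lambda>n. ereal (f n)) = ereal L"
  by (rule lim_imp_Liminf) (auto intro: tendsto_ereal)

lemma liminf_ereal_asymp_eq:
  fixes f g :: "nat \<Rightarrow> real"
  assumes "(\<lambda>n. f n - g n) \<longlonglongrightarrow> 0"
  shows "liminf (\<lambda>n. ereal (f n)) = liminf (\<lambda>n. ereal (g n))"
proof -
  have "(\<lambda>n. ereal (f n - g n)) \<longlonglongrightarrow> ereal 0"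
    using assms by (rule tendsto_ereal)
  then have "liminf (\<lambda>n. ereal (f n - g n) + ereal (g n)) = ereal 0 + liminf (\<lambda>n. ereal (g n))"
    by (intro ereal_liminf_lim_add) auto
  then show ?thesis
    by (simp add: zero_ereal_def[symmetric])
qed

lemma average_drop_prefix:
  fixes x :: "nat \<Rightarrow> real"
  assumes bound: "\<And>i. \<bar>x i\<bar> \<le> B"
  shows "(\<lambda>N. (\<Sum>i<N + n. x i) / real (N + n) - (\<Sum>i<N. x (n + i)) / real N) \<longlonglongrightarrow> 0"
proof -
  define C where "C = (\<Sum>i<n. x i)"
  define b where "b N = (\<Sum>i<N. x (n + i)) / real N" for N
  have split: "(\<Sum>i<N + n. x i) = C + (\<Sum>i<N. x (n + i))" for N
    unfolding C_def by (induction N) (simp_all add: add_ac)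
  have b_bound: "\<bar>b N\<bar> \<le> B" for N
  proof (cases "N = 0")
    case False
    have "\<bar>\<Sum>i<N. x (n + i)\<bar> \<le> (\<Sum>i<N. \<bar>x (n + i)\<bar>)"
      by (rule sum_abs)
    also have "\<dots> \<le> real N * B"
      using sum_mono[of "{..<N}" "\<lambda>i. \<bar>x (n + i)\<bar>" "\<lambda>_. B"] bound by simp
    finally have "\<bar>\<Sum>i<N. x (n + i)\<bar> \<le> real N * B" .
    with False show ?thesis
      by (simp add: b_def abs_divide field_simps)
  qed (use bound[of 0] in \<open>simp add: b_def\<close>)
  have diff: "(\<Sum>i<N + n. x i) / real (N + n) - b N = (C - real n * b N) / real (N + n)" for N
    by (cases "N = 0") (auto simp: split b_def C_def field_simps)
  have "(\<lambda>M. (C - real n * b (M - n)) / real M) \<longlonglongrightarrow> 0"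
  proof (rule bounded_over_n_tendsto_0[of _ "\<bar>C\<bar> + real n * B"], rule always_eventually, rule allI)
    fix M
    have "\<bar>real n * b (M - n)\<bar> \<le> real n * B"
      using b_bound by (simp add: abs_mult mult_left_mono)
    then show "\<bar>C - real n * b (M - n)\<bar> \<le> \<bar>C\<bar> + real n * B"
      by linarith
  qed
  from LIMSEQ_ignore_initial_segment[OF this, of n]
  have "(\<lambda>N. (C - real n * b N) / real (N + n)) \<longlonglongrightarrow> 0"
    by simp
  then have "(\<lambda>N. (\<Sum>i<N + n. x i) / real (N + n) - b N) \<longlonglongrightarrow> 0"
    by (simp only: diff)
  then show ?thesis
    by (simp only: b_def)
qed

lemma mean_payoff_suffix:
  fixes w :: "'v \<times> 'v \<Rightarrow> real"
  assumes "\<And>i. \<bar>w (\<pi> i, \<pi> (Suc i))\<bar> \<le> B"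
  shows "mean_payoff w (\<lambda>i. \<pi> (n + i)) = mean_payoff w \<pi>"
proof -
  let ?avg = "\<lambda>N. (\<Sum>i<N. w (\<pi> i, \<pi> (Suc i))) / real N"
  have "mean_payoff w \<pi> = liminf (\<lambda>N. ereal (?avg (N + n)))"
    unfolding mean_payoff_def by (rule liminf_shift_k[of "\<lambda>N. ereal (?avg N)", symmetric])
  also have "\<dots> = mean_payoff w (\<lambda>i. \<pi> (n + i))"
    unfolding mean_payoff_def
    using average_drop_prefix[of "\<lambda>i. w (\<pi> i, \<pi> (Suc i))" B n] assms
    by (intro liminf_ereal_asymp_eq) simp
  finally show ?thesis ..
qed

lemma sum_along_eq_sum_counts:
  fixes f :: "'v \<times> 'v \<Rightarrow> real"
  assumes "finite E" and "\<And>i. (\<pi> i, \<pi> (Suc i)) \<in> E"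
  shows "(\<Sum>i<N. f (\<pi> i, \<pi> (Suc i)))
           = (\<Sum>e\<in>E. real (card {i. i < N \<and> (\<pi> i, \<pi> (Suc i)) = e}) * f e)"
proof -
  have "(\<Sum>i<N. f (\<pi> i, \<pi> (Suc i)))
          = (\<Sum>e\<in>E. \<Sum>i\<in>{i. i \<in> {..<N} \<and> (\<pi> i, \<pi> (Suc i)) = e}. f (\<pi> i, \<pi> (Suc i)))"
    using assms by (intro sum.group[symmetric]) auto
  also have "\<dots> = (\<Sum>e\<in>E. \<Sum>i\<in>{i. i < N \<and> (\<pi> i, \<pi> (Suc i)) = e}. f e)"
    by (intro sum.cong) auto
  finally show ?thesis
    by simp
qed

context
  fixes \<pi> :: "nat \<Rightarrow> 'v" and E :: "('v \<times> 'v) set"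
  assumes finite_E: "finite E"
    and step_in_E: "\<And>i. (\<pi> i, \<pi> (Suc i)) \<in> E"
    and convergent_freq: "\<And>e. e \<in> E \<Longrightarrow> convergent (freq_seq \<pi> e)"
begin

lemma freq_LIMSEQ: "e \<in> E \<Longrightarrow> freq_seq \<pi> e \<longlonglongrightarrow> freq \<pi> e"
  using convergent_freq by (simp add: freq_def convergent_LIMSEQ_iff)

lemma average_LIMSEQ_sum_freq:
  fixes f :: "'v \<times> 'v \<Rightarrow> real"
  shows "(\<lambda>N. (\<Sum>i<N. f (\<pi> i, \<pi> (Suc i))) / real N) \<longlonglongrightarrow> (\<Sum>e\<in>E. freq \<pi> e * f e)"
proof -
  have "(\<Sum>i<N. f (\<pi> i, \<pi> (Suc i))) / real N = (\<Sum>e\<in>E. freq_seq \<pi> e N * f e)" for N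
    unfolding sum_along_eq_sum_counts[of E \<pi>, OF finite_E step_in_E] freq_seq_def sum_divide_distrib
    by simp
  then show ?thesis
    using freq_LIMSEQ by (simp add: tendsto_sum tendsto_mult_right)
qed

lemma mean_payoff_eq_sum_freq: "mean_payoff w \<pi> = ereal (\<Sum>e\<in>E. freq \<pi> e * w e)"
  unfolding mean_payoff_def by (rule liminf_ereal_LIMSEQ[OF average_LIMSEQ_sum_freq])

lemma freq_nonneg: "e \<in> E \<Longrightarrow> freq \<pi> e \<ge> 0"
  by (rule LIMSEQ_le_const[OF freq_LIMSEQ]) (auto simp: freq_seq_def)

lemma freq_eq_0:
  assumes "e \<in> E" and "e \<notin> inf_visited \<pi> \<times> inf_visited \<pi>"
  shows "freq \<pi> e = 0"
proof -
  obtain a b where e: "e = (a, b)"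
    by (cases e)
  have "eventually (\<lambda>i. \<pi> i \<noteq> a) sequentially \<or> eventually (\<lambda>i. \<pi> i \<noteq> b) sequentially"
    using assms(2) unfolding e inf_visited_def by (auto simp: not_frequently)
  then have "eventually (\<lambda>i. (\<pi> i, \<pi> (Suc i)) \<noteq> e) sequentially"
  proof
    assume "eventually (\<lambda>i. \<pi> i \<noteq> a) sequentially"
    then show ?thesis
      unfolding e by (rule eventually_mono) simp
  next
    assume "eventually (\<lambda>i. \<pi> i \<noteq> b) sequentially"
    then have "eventually (\<lambda>i. \<pi> (Suc i) \<noteq> b) sequentially"
      by (rule eventually_sequentially_Suc[THEN iffD2])
    then show ?thesis
      unfolding e by (rule eventually_mono) simp
  qed
  then obtain N0 where N0: "\<And>i. i \<ge> N0 \<Longrightarrow> (\<pi> i, \<pi> (Suc i)) \<noteq> e"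
    by (auto simp: eventually_sequentially)
  have "card {i. i < N \<and> (\<pi> i, \<pi> (Suc i)) = e} \<le> N0" for N
  proof -
    have "{i. i < N \<and> (\<pi> i, \<pi> (Suc i)) = e} \<subseteq> {..<N0}"
      using N0 not_le by auto
    then show ?thesis
      using card_mono[OF finite_lessThan] by fastforce
  qed
  then have "freq_seq \<pi> e \<longlonglongrightarrow> 0"
    unfolding freq_seq_def by (intro bounded_over_n_tendsto_0[of _ "real N0"]) auto
  with freq_LIMSEQ[OF assms(1)] show ?thesis
    by (rule LIMSEQ_unique)
qed

lemma sum_freq_eq_1: "(\<Sum>e\<in>E. freq \<pi> e) = 1"
proof -
  have "eventually (\<lambda>N. (\<Sum>i<N. 1) / real N = (1::real)) sequentially"
    by (rule eventually_sequentiallyI[of 1]) simp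
  then have "(\<lambda>N. (\<Sum>i<N. 1) / real N) \<longlonglongrightarrow> (1::real)"
    by (rule tendsto_eventually)
  with average_LIMSEQ_sum_freq[of "\<lambda>_. 1"] show ?thesis
    using LIMSEQ_unique by fastforce
qed

lemma freq_out_eq_in:
  "(\<Sum>e\<in>{e\<in>E. fst e = t}. freq \<pi> e) = (\<Sum>e\<in>{e\<in>E. snd e = t}. freq \<pi> e)"
proof -
  define out where "out e = (if fst e = t then 1 else 0 :: real)" for e :: "'v \<times> 'v"
  define inc where "inc e = (if snd e = t then 1 else 0 :: real)" for e :: "'v \<times> 'v"
  define x where "x i = (if \<pi> i = t then 1 else 0 :: real)" for i
  \<comment> \<open>Entries into and exits from t along a prefix differ by at most one.\<close>
  have "(\<Sum>i<N. inc (\<pi> i, \<pi> (Suc i))) - (\<Sum>i<N. out (\<pi> i, \<pi> (Suc i))) = x N - x 0" for N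
  proof -
    have "(\<Sum>i<N. inc (\<pi> i, \<pi> (Suc i))) - (\<Sum>i<N. out (\<pi> i, \<pi> (Suc i)))
            = (\<Sum>i<N. x (Suc i) - x i)"
      by (simp add: inc_def out_def x_def sum_subtractf)
    then show ?thesis
      by (simp add: sum_lessThan_telescope)
  qed
  then have "(\<lambda>N. (\<Sum>i<N. inc (\<pi> i, \<pi> (Suc i))) / real N - (\<Sum>i<N. out (\<pi> i, \<pi> (Suc i))) / real N)
               \<longlonglongrightarrow> 0"
    by (simp add: diff_divide_distrib[symmetric] bounded_over_n_tendsto_0[of _ 1] x_def)
  moreover have "(\<lambda>N. (\<Sum>i<N. inc (\<pi> i, \<pi> (Suc i))) / real N - (\<Sum>i<N. out (\<pi> i, \<pi> (Suc i))) / real N)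
               \<longlonglongrightarrow> (\<Sum>e\<in>E. freq \<pi> e * inc e) - (\<Sum>e\<in>E. freq \<pi> e * out e)"
    by (intro tendsto_diff average_LIMSEQ_sum_freq)
  ultimately have "(\<Sum>e\<in>E. freq \<pi> e * inc e) = (\<Sum>e\<in>E. freq \<pi> e * out e)"
    using LIMSEQ_unique by fastforce
  then show ?thesis
    using finite_E by (simp add: sum.inter_filter inc_def out_def if_distrib cong: if_cong)
qed

end

lemma valid_profile_valid_for: "valid_profile G s \<Longrightarrow> valid_for G Ps s"
  by (simp add: valid_profile_def valid_for_def)

lemma valid_profile_combine:
  "valid_for G {p} s1 \<Longrightarrow> valid_for G (- {p}) s2 \<Longrightarrow> valid_profile G (combine G p s1 s2)"
  by (auto simp: valid_profile_def valid_for_def combine_def)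

lemma valid_for_prefix: "valid_for G Ps s \<Longrightarrow> valid_for G Ps (\<lambda>h. s (P @ h))"
  unfolding valid_for_def by (metis Nil_is_append_conv last_appendR)

lemma finite_edges: "mmpg_arena G \<Longrightarrow> finite (edges G)"
  unfolding mmpg_arena_def by (meson finite_SigmaI finite_subset)

lemma play_in_verts_and_edges:
  assumes arena: "mmpg_arena G" and valid: "valid_profile G s" and v: "v \<in> verts G"
  shows "play s v i \<in> verts G \<and> (play s v i, play s v (Suc i)) \<in> edges G"
proof (induction i)
  case 0
  have "(v, s [v]) \<in> edges G"
    using valid v unfolding valid_profile_def valid_for_def by (metis last.simps list.distinct(1) UNIV_I)
  then show ?case
    using v by (simp add: play_Suc)
next
  case (Suc i)
  then have "play s v (Suc i) \<in> verts G"
    using arena unfolding mmpg_arena_def by auto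
  moreover have "(play s v (Suc i), s (hist s v (Suc i))) \<in> edges G"
    using valid calculation unfolding valid_profile_def valid_for_def by (metis hist_not_Nil play_def UNIV_I)
  ultimately show ?case
    by (simp add: play_Suc)
qed

lemma is_hist_from_hist:
  assumes "mmpg_arena G" "valid_profile G s" "v \<in> verts G"
  shows "is_hist_from G v (hist s v n)"
  unfolding is_hist_from_def using play_in_verts_and_edges[OF assms]
  by (auto simp: hd_hist nth_hist)

lemma init_in_verts: "mmpg_arena G \<Longrightarrow> init G \<in> verts G"
  by (simp add: mmpg_arena_def)

lemma play_edge:
  "mmpg_arena G \<Longrightarrow> valid_profile G s \<Longrightarrow> (play s (init G) i, play s (init G) (Suc i)) \<in> edges G"
  using play_in_verts_and_edges[OF _ _ init_in_verts] by blast

lemma visited_subset_verts: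
  "mmpg_arena G \<Longrightarrow> valid_profile G s \<Longrightarrow> visited (play s (init G)) \<subseteq> verts G"
  unfolding visited_def using play_in_verts_and_edges[OF _ _ init_in_verts] by blast

lemma finite_visited:
  "mmpg_arena G \<Longrightarrow> valid_profile G s \<Longrightarrow> finite (visited (play s (init G)))"
  by (rule finite_subset[OF visited_subset_verts]) (auto simp: mmpg_arena_def)

lemma payoff_eq_sum_freq:
  assumes "mmpg_arena G" "valid_profile G \<sigma>" "well_behaved G \<sigma>"
  shows "payoff G p \<sigma> = ereal (\<Sum>e\<in>edges G. freq (play \<sigma> (init G)) e * rew G p e)"
  unfolding payoff_def using assms
  by (intro mean_payoff_eq_sum_freq finite_edges play_edge) (auto simp: well_behaved_def)

lemma hist_shift:
  assumes base: "hist t v k = P @ [u]"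
    and step: "\<And>i. hist t v (k + i) = P @ hist r u i \<Longrightarrow> t (P @ hist r u i) = r (hist r u i)"
  shows "hist t v (k + i) = P @ hist r u i"
proof (induction i)
  case (Suc i)
  then show ?case
    using step[OF Suc] by simp
qed (use base in simp)

lemma payoff_eq_suffix:
  assumes arena: "mmpg_arena G" and valid: "valid_profile G \<tau>"
    and shift: "\<And>i. hist \<tau> (init G) (k + i) = P @ hist \<rho> u i"
  shows "payoff G p \<tau> = mean_payoff (rew G p) (play \<rho> u)"
proof -
  let ?\<pi> = "play \<tau> (init G)"
  have "play \<rho> u = (\<lambda>i. ?\<pi> (k + i))"
    using shift by (simp add: play_def fun_eq_iff)
  moreover have "\<bar>rew G p (?\<pi> i, ?\<pi> (Suc i))\<bar> \<le> (\<Sum>e\<in>edges G. \<bar>rew G p e\<bar>)" for i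
    using play_edge[OF arena valid] finite_edges[OF arena]
    by (intro member_le_sum[of _ _ "\<lambda>e. \<bar>rew G p e\<bar>", simplified]) auto
  ultimately show ?thesis
    unfolding payoff_def by (metis mean_payoff_suffix)
qed

lemma inc_value_nonneg:
  assumes "mmpg_arena G" "valid_profile G \<tau>" "incentive_profile G \<gamma>" "p \<in> followers G"
  shows "0 \<le> inc_value G \<gamma> p \<tau>"
proof -
  have "0 \<le> \<gamma> p (hist \<tau> (init G) i)" for i
    using assms is_hist_from_hist[OF assms(1,2) init_in_verts[OF assms(1)]]
    by (auto simp: incentive_profile_def)
  then show ?thesis
    unfolding inc_value_def by (intro Liminf_bounded always_eventually allI) (simp add: sum_nonneg)
qed

lemma inc_value_const:
  assumes "\<And>n. \<gamma> p (hist \<sigma> (init G) n) = c"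
  shows "inc_value G \<gamma> p \<sigma> = ereal c"
proof -
  have "eventually (\<lambda>n. (\<Sum>i\<in>{1..n}. \<gamma> p (hist \<sigma> (init G) i)) / real n = c) sequentially"
    by (rule eventually_sequentiallyI[of 1]) (simp add: assms)
  then show ?thesis
    unfolding inc_value_def by (intro liminf_ereal_LIMSEQ tendsto_eventually)
qed

lemma inc_value_eventually_0:
  assumes "\<And>i. n < i \<Longrightarrow> \<gamma> p (hist \<sigma> (init G) i) = 0"
  shows "inc_value G \<gamma> p \<sigma> = 0"
proof -
  define K where "K = (\<Sum>i\<in>{1..n}. \<gamma> p (hist \<sigma> (init G) i))"
  have "(\<Sum>i\<in>{1..N}. \<gamma> p (hist \<sigma> (init G) i)) = K" if "n \<le> N" for N
    unfolding K_def using that assms by (intro sum.mono_neutral_right) auto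
  then have "eventually (\<lambda>N. \<bar>\<Sum>i\<in>{1..N}. \<gamma> p (hist \<sigma> (init G) i)\<bar> \<le> \<bar>K\<bar>) sequentially"
    by (intro eventually_sequentiallyI[of n]) simp
  then show ?thesis
    unfolding inc_value_def zero_ereal_def by (intro liminf_ereal_LIMSEQ bounded_over_n_tendsto_0)
qed

section \<open>Unilateral deviations\<close>

lemma game_val_le_isp_value:
  assumes arena: "mmpg_arena G" and p: "p \<in> followers G" and opt: "opt_max G p t"
    and valid: "valid_profile G \<sigma>" and inc: "incentive_profile G \<gamma>" and isp: "is_isp G \<sigma> \<gamma>"
  shows "game_val G p (play \<sigma> (init G) k) \<le> payoff G p \<sigma> + inc_value G \<gamma> p \<sigma>"
proof -
  \<comment> \<open>p follows \<sigma> for k steps and then switches to its optimal strategy t in G_p.\<close>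
  define s where "s h = (if length h \<le> k then \<sigma> h else t (last h))" for h
  define \<tau> where "\<tau> = combine G p s \<sigma>"
  define P where "P = butlast (hist \<sigma> (init G) k)"
  define u where "u = play \<sigma> (init G) k"
  define \<rho> where "\<rho> = combine G p (\<lambda>h. t (last h)) (\<lambda>h. \<sigma> (P @ h))"
  have s_valid: "valid_for G {p} s"
    using valid opt unfolding valid_for_def valid_profile_def opt_max_def s_def by auto
  have \<tau>_valid: "valid_profile G \<tau>"
    unfolding \<tau>_def by (rule valid_profile_combine[OF s_valid valid_profile_valid_for[OF valid]])
  have prefix: "hist \<tau> (init G) i = hist \<sigma> (init G) i" if "i \<le> k" for i
    using that by (induction i) (auto simp: \<tau>_def combine_def s_def)
  have "hist \<tau> (init G) (k + i) = P @ hist \<rho> u i" for i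
  proof (rule hist_shift)
    show "hist \<tau> (init G) k = P @ [u]"
      by (simp add: prefix P_def u_def play_def)
    show "\<tau> (P @ hist \<rho> u i) = \<rho> (hist \<rho> u i)" for i
      by (simp add: \<tau>_def \<rho>_def combine_def s_def P_def)
  qed
  then have payoff_\<tau>: "payoff G p \<tau> = mean_payoff (rew G p) (play \<rho> u)"
    by (rule payoff_eq_suffix[OF arena \<tau>_valid])
  have "u \<in> verts G"
    unfolding u_def using play_in_verts_and_edges[OF arena valid init_in_verts[OF arena]] by blast
  moreover have "valid_for G (- {p}) (\<lambda>h. \<sigma> (P @ h))"
    using valid_profile_valid_for[OF valid] by (rule valid_for_prefix)
  ultimately have "game_val G p u \<le> payoff G p \<tau>"
    using opt unfolding payoff_\<tau> opt_max_def \<rho>_def by blast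
  also have "\<dots> \<le> payoff G p \<tau> + inc_value G \<gamma> p \<tau>"
    using inc_value_nonneg[OF arena \<tau>_valid inc p] by (simp add: add_increasing2)
  also have "\<dots> \<le> payoff G p \<sigma> + inc_value G \<gamma> p \<sigma>"
    using isp p s_valid unfolding is_isp_def \<tau>_def by blast
  finally show ?thesis
    unfolding u_def .
qed

lemma first_divergence:
  assumes "hist s v m \<noteq> hist t v m"
  shows "\<exists>n. hist s v n = hist t v n \<and> s (hist t v n) \<noteq> t (hist t v n)"
  using assms by (induction m) auto

lemma dev_after_deviation:
  fixes G :: "('p, 'v) arena" and p :: 'p and \<sigma> \<sigma>' :: "'v list \<Rightarrow> 'v"
  defines "\<tau> \<equiv> combine G p \<sigma>' \<sigma>"
  assumes arena: "mmpg_arena G" and valid: "valid_profile G \<tau>"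
    and agree: "hist \<tau> (init G) n = hist \<sigma> (init G) n"
    and deviates: "\<tau> (hist \<sigma> (init G) n) \<noteq> \<sigma> (hist \<sigma> (init G) n)"
    and "n < j"
  shows "deviating G \<sigma> (hist \<tau> (init G) j) \<and> dev G \<sigma> (hist \<tau> (init G) j) = p"
proof -
  define h where "h = hist \<tau> (init G) j"
  have "take (Suc (Suc n)) h \<noteq> take (Suc (Suc n)) (hist \<sigma> (init G) j)"
    using agree deviates \<open>n < j\<close> by (simp add: h_def take_hist)
  then have "deviating G \<sigma> h"
    using is_hist_from_hist[OF arena valid init_in_verts[OF arena]] by (auto simp: deviating_def h_def)
  \<comment> \<open>The last index at which h leaves \<sigma> is one where \<tau> differs from \<sigma>, hence owned by p.\<close>
  define leaves where "leaves i \<longleftrightarrow> Suc i < length h \<and> h ! Suc i \<noteq> \<sigma> (take (Suc i) h)" for i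
  have "leaves n"
    using agree deviates \<open>n < j\<close> by (simp add: leaves_def h_def nth_Suc_hist take_hist)
  moreover have "leaves i \<Longrightarrow> i \<le> j" for i
    by (simp add: leaves_def h_def)
  ultimately have "leaves (Greatest leaves)"
    by (rule GreatestI_nat)
  then have "owner G (h ! Greatest leaves) = p"
    unfolding leaves_def h_def
    by (auto simp: nth_Suc_hist take_hist nth_hist play_def \<tau>_def combine_def split: if_splits)
  then have "dev G \<sigma> h = p"
    by (simp add: dev_def leaves_def[abs_def])
  with \<open>deviating G \<sigma> h\<close> show ?thesis
    by (simp add: h_def)
qed

lemma psp_coalition_move:
  assumes "is_psp G tmax tmin \<sigma> \<gamma>" and "deviating G \<sigma> h" and "dev G \<sigma> h = p"
    and "p \<in> followers G" and "owner G (last h) \<noteq> p"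
  shows "\<sigma> h = tmin p (last h)"
  using assms unfolding is_psp_def by auto

lemma psp_deviator_incentive:
  assumes "is_psp G tmax tmin \<sigma> \<gamma>" and "deviating G \<sigma> h" and "dev G \<sigma> h = p"
    and "p \<in> followers G"
  shows "\<gamma> p h = 0"
  using assms unfolding is_psp_def by auto

lemma psp_deviation_bound:
  fixes G :: "('p, 'v) arena" and p :: 'p and \<sigma> \<sigma>' :: "'v list \<Rightarrow> 'v"
  defines "\<tau> \<equiv> combine G p \<sigma>' \<sigma>"
  assumes arena: "mmpg_arena G" and p: "p \<in> followers G" and opt: "opt_min G p (tmin p)"
    and psp: "is_psp G tmax tmin \<sigma> \<gamma>" and \<sigma>'_valid: "valid_for G {p} \<sigma>'"
    and differs: "hist \<tau> (init G) m \<noteq> hist \<sigma> (init G) m"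
  shows "\<exists>k. payoff G p \<tau> \<le> game_val G p (play \<sigma> (init G) k) \<and> inc_value G \<gamma> p \<tau> = 0"
proof -
  have valid: "valid_profile G \<sigma>"
    using psp by (simp add: is_psp_def)
  have \<tau>_valid: "valid_profile G \<tau>"
    unfolding \<tau>_def by (rule valid_profile_combine[OF \<sigma>'_valid valid_profile_valid_for[OF valid]])
  obtain n where agree: "hist \<tau> (init G) n = hist \<sigma> (init G) n"
    and deviates: "\<tau> (hist \<sigma> (init G) n) \<noteq> \<sigma> (hist \<sigma> (init G) n)"
    using first_divergence[OF differs] by blast
  have after: "deviating G \<sigma> (hist \<tau> (init G) j) \<and> dev G \<sigma> (hist \<tau> (init G) j) = p" if "n < j" for j
    using dev_after_deviation[OF arena \<tau>_valid[unfolded \<tau>_def]] agree deviates that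
    unfolding \<tau>_def by blast
  \<comment> \<open>From the deviation vertex u on, the coalition plays its optimal strategy in G_p.\<close>
  define u where "u = play \<sigma> (init G) n"
  define P where "P = butlast (hist \<sigma> (init G) n)"
  define \<rho> where "\<rho> = combine G p (\<lambda>h. \<sigma>' (P @ h)) (\<lambda>h. tmin p (last h))"
  have owner_u: "owner G u = p"
    using deviates by (auto simp: u_def play_def \<tau>_def combine_def split: if_splits)
  have "hist \<tau> (init G) (n + i) = P @ hist \<rho> u i" for i
  proof (rule hist_shift)
    show "hist \<tau> (init G) n = P @ [u]"
      by (simp add: agree P_def u_def play_def)
    fix i
    assume hist_i: "hist \<tau> (init G) (n + i) = P @ hist \<rho> u i"
    show "\<tau> (P @ hist \<rho> u i) = \<rho> (hist \<rho> u i)"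
    proof (cases "owner G (last (hist \<rho> u i)) = p")
      case True
      then show ?thesis
        by (simp add: \<tau>_def \<rho>_def combine_def)
    next
      case False
      then have "n < n + i"
        using owner_u by (cases i) simp_all
      from psp_coalition_move[OF psp _ _ p] after[OF this] False
      have "\<sigma> (P @ hist \<rho> u i) = tmin p (last (hist \<rho> u i))"
        unfolding hist_i by simp
      with False show ?thesis
        by (simp add: \<tau>_def \<rho>_def combine_def)
    qed
  qed
  then have "payoff G p \<tau> = mean_payoff (rew G p) (play \<rho> u)"
    by (rule payoff_eq_suffix[OF arena \<tau>_valid])
  also have "\<dots> \<le> game_val G p u"
  proof -
    have "u \<in> verts G"
      unfolding u_def using play_in_verts_and_edges[OF arena valid init_in_verts[OF arena]] by blast
    with opt valid_for_prefix[OF \<sigma>'_valid] show ?thesis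
      unfolding opt_min_def \<rho>_def by blast
  qed
  finally have "payoff G p \<tau> \<le> game_val G p u" .
  moreover have "inc_value G \<gamma> p \<tau> = 0"
    using psp_deviator_incentive[OF psp _ _ p] after by (intro inc_value_eventually_0) blast
  ultimately show ?thesis
    unfolding u_def by blast
qed

section \<open>The linear program\<close>

lemma LP_flow_constraints_of_play:
  assumes arena: "mmpg_arena G" and valid: "valid_profile G \<sigma>" and wb: "well_behaved G \<sigma>"
  defines "\<pi> \<equiv> play \<sigma> (init G)"
  defines "S \<equiv> inf_visited \<pi>" and "pv \<equiv> \<lambda>v. \<Sum>e\<in>{e\<in>edges G. fst e = v}. freq \<pi> e"
  shows "(\<forall>v\<in>verts G. (v \<notin> S \<longrightarrow> pv v = 0) \<and> (v \<in> S \<longrightarrow> pv v \<ge> 0))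
    \<and> (\<forall>e\<in>edges G. (e \<notin> S \<times> S \<longrightarrow> freq \<pi> e = 0) \<and> (e \<in> S \<times> S \<longrightarrow> freq \<pi> e \<ge> 0))
    \<and> (\<Sum>v\<in>verts G. pv v) = 1
    \<and> (\<forall>s\<in>S. pv s = (\<Sum>e\<in>{e\<in>edges G. fst e = s}. freq \<pi> e))
    \<and> (\<forall>t\<in>S. pv t = (\<Sum>e\<in>{e\<in>edges G. snd e = t}. freq \<pi> e))"
proof -
  have E: "finite (edges G)"
    using arena by (rule finite_edges)
  have step: "(\<pi> i, \<pi> (Suc i)) \<in> edges G" for i
    unfolding \<pi>_def using arena valid by (rule play_edge)
  have cv: "convergent (freq_seq \<pi> e)" if "e \<in> edges G" for e
    using wb that by (simp add: well_behaved_def \<pi>_def)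
  note freq_nonneg = freq_nonneg[OF E step cv] and freq_eq_0 = freq_eq_0[OF E step cv]
  have "(\<Sum>v\<in>verts G. pv v) = (\<Sum>e\<in>edges G. freq \<pi> e)"
    unfolding pv_def using arena E
    by (intro sum.group) (auto simp: mmpg_arena_def)
  also have "\<dots> = 1"
    by (rule sum_freq_eq_1[OF E step cv])
  finally have "(\<Sum>v\<in>verts G. pv v) = 1" .
  moreover have "pv v = 0" if "v \<notin> S" for v
    unfolding pv_def using that freq_eq_0 by (intro sum.neutral) (auto simp: S_def)
  moreover have "pv v \<ge> 0" for v
    unfolding pv_def using freq_nonneg by (intro sum_nonneg) auto
  ultimately show ?thesis
    using freq_nonneg freq_eq_0 freq_out_eq_in[OF E step cv] unfolding S_def pv_def by blast
qed

lemma LP_sat_of_psp_isp: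
  assumes arena: "mmpg_arena G" and opt: "\<forall>p\<in>followers G. opt_max G p (tmax p)"
    and wb: "well_behaved G \<sigma>" and psp: "is_psp G tmax tmin \<sigma> \<gamma>" and isp: "is_isp G \<sigma> \<gamma>"
  defines "\<pi> \<equiv> play \<sigma> (init G)"
  shows "LP_sat G (visited \<pi>) (inf_visited \<pi>)
           (\<lambda>v. \<Sum>e\<in>{e\<in>edges G. fst e = v}. freq \<pi> e) (freq \<pi>) (\<lambda>p. \<gamma> p [init G])"
proof -
  have valid: "valid_profile G \<sigma>" and inc: "incentive_profile G \<gamma>"
    using psp by (simp_all add: is_psp_def)
  have "\<gamma> p [init G] \<ge> 0
      \<and> ereal (\<gamma> p [init G] + (\<Sum>e\<in>edges G. freq \<pi> e * rew G p e)) \<ge> Max (game_val G p ` visited \<pi>)"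
    if p: "p \<in> followers G" for p
  proof
    show "\<gamma> p [init G] \<ge> 0"
      using inc p by (simp add: incentive_profile_def is_hist_from_def)
    have "inc_value G \<gamma> p \<sigma> = ereal (\<gamma> p [init G])"
      using psp p by (intro inc_value_const) (simp add: is_psp_def)
    then have "game_val G p (\<pi> k) \<le> ereal (\<gamma> p [init G] + (\<Sum>e\<in>edges G. freq \<pi> e * rew G p e))" for k
      using game_val_le_isp_value[OF arena p _ valid inc isp, of "tmax p"] opt p
        payoff_eq_sum_freq[OF arena valid wb, of p]
      by (simp add: \<pi>_def add.commute)
    then show "ereal (\<gamma> p [init G] + (\<Sum>e\<in>edges G. freq \<pi> e * rew G p e)) \<ge> Max (game_val G p ` visited \<pi>)"
      using finite_visited[OF arena valid] by (auto simp: visited_def \<pi>_def)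
  qed
  with LP_flow_constraints_of_play[OF arena valid wb] show ?thesis
    unfolding LP_sat_def \<pi>_def by blast
qed

lemma isp_of_LP_sat:
  assumes arena: "mmpg_arena G" and opt: "\<forall>p\<in>followers G. opt_min G p (tmin p)"
    and valid: "valid_profile G \<sigma>" and wb: "well_behaved G \<sigma>"
    and LP: "LP_sat G (visited (play \<sigma> (init G))) (inf_visited (play \<sigma> (init G)))
               (\<lambda>v. \<Sum>e\<in>{e\<in>edges G. fst e = v}. freq (play \<sigma> (init G)) e) (freq (play \<sigma> (init G))) g"
    and psp: "is_psp G tmax tmin \<sigma>' \<gamma>'" and same_play: "play \<sigma>' (init G) = play \<sigma> (init G)"
    and g: "\<forall>p\<in>followers G. \<gamma>' p [init G] = g p"
  shows "is_isp G \<sigma>' \<gamma>'"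
  unfolding is_isp_def
proof (intro ballI allI impI)
  fix p s
  assume p: "p \<in> followers G" and s_valid: "valid_for G {p} s"
  define \<pi> where "\<pi> = play \<sigma> (init G)"
  define \<tau> where "\<tau> = combine G p s \<sigma>'"
  define target where "target = ereal (g p + (\<Sum>e\<in>edges G. freq \<pi> e * rew G p e))"
  have "payoff G p \<sigma>' + inc_value G \<gamma>' p \<sigma>' = target"
  proof -
    have "inc_value G \<gamma>' p \<sigma>' = ereal (g p)"
      using psp p g by (intro inc_value_const) (simp add: is_psp_def)
    moreover have "payoff G p \<sigma>' = payoff G p \<sigma>"
      by (simp add: payoff_def same_play)
    ultimately show ?thesis
      using payoff_eq_sum_freq[OF arena valid wb, of p] by (simp add: target_def \<pi>_def add.commute)
  qed
  moreover have "payoff G p \<tau> + inc_value G \<gamma>' p \<tau> \<le> target"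
  proof (cases "\<forall>n. hist \<tau> (init G) n = hist \<sigma>' (init G) n")
    case True
    then have "play \<tau> (init G) = play \<sigma>' (init G)"
      by (simp add: play_def fun_eq_iff)
    moreover have "inc_value G \<gamma>' p \<tau> = inc_value G \<gamma>' p \<sigma>'"
      using True by (simp add: inc_value_def)
    ultimately show ?thesis
      using \<open>payoff G p \<sigma>' + inc_value G \<gamma>' p \<sigma>' = target\<close> by (simp add: payoff_def)
  next
    case False
    then obtain m where "hist (combine G p s \<sigma>') (init G) m \<noteq> hist \<sigma>' (init G) m"
      unfolding \<tau>_def by blast
    from psp_deviation_bound[OF arena p _ psp s_valid this] opt p
    obtain k where payoff_\<tau>: "payoff G p \<tau> \<le> game_val G p (\<pi> k)"
      and "inc_value G \<gamma>' p \<tau> = 0"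
      unfolding \<tau>_def \<pi>_def same_play by blast
    have "game_val G p (\<pi> k) \<le> Max (game_val G p ` visited \<pi>)"
      using finite_visited[OF arena valid] by (simp add: visited_def \<pi>_def)
    also have "\<dots> \<le> target"
      using LP p unfolding LP_sat_def target_def \<pi>_def by blast
    finally show ?thesis
      using payoff_\<tau> \<open>inc_value G \<gamma>' p \<tau> = 0\<close> by simp
  qed
  ultimately show "payoff G p \<tau> + inc_value G \<gamma>' p \<tau> \<le> payoff G p \<sigma>' + inc_value G \<gamma>' p \<sigma>'"
    by simp
qed

theorem corollary1:
  fixes G :: "('p, 'v) arena"
    and tmax tmin :: "'p \<Rightarrow> 'v \<Rightarrow> 'v"
  assumes arena: "mmpg_arena G"
    and opt: "\<forall>p\<in>followers G. opt_max G p (tmax p) \<and> opt_min G p (tmin p)"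
  shows
    "(\<forall>\<sigma> \<gamma>. well_behaved G \<sigma> \<and> is_psp G tmax tmin \<sigma> \<gamma> \<and> is_isp G \<sigma> \<gamma> \<longrightarrow>
        (let \<pi> = play \<sigma> (init G) in
          LP_sat G (visited \<pi>) (inf_visited \<pi>)
            (\<lambda>v. \<Sum>e\<in>{e\<in>edges G. fst e = v}. freq \<pi> e) (freq \<pi>)
            (\<lambda>p. \<gamma> p [init G])))
   \<and> (\<forall>\<sigma> \<gamma> g. valid_profile G \<sigma> \<and> well_behaved G \<sigma> \<and> incentive_profile G \<gamma>
        \<and> (\<forall>p\<in>followers G. inc_value G \<gamma> p \<sigma> = ereal (g p))
        \<and> (let \<pi> = play \<sigma> (init G) in
             LP_sat G (visited \<pi>) (inf_visited \<pi>)
               (\<lambda>v. \<Sum>e\<in>{e\<in>edges G. fst e = v}. freq \<pi> e) (freq \<pi>) g)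
      \<longrightarrow> (\<forall>\<sigma>' \<gamma>'. is_psp G tmax tmin \<sigma>' \<gamma>' \<and> play \<sigma>' (init G) = play \<sigma> (init G)
             \<and> (\<forall>p\<in>followers G. \<gamma>' p [init G] = g p)
           \<longrightarrow> is_isp G \<sigma>' \<gamma>'))"
proof -
  have opt_max: "\<forall>p\<in>followers G. opt_max G p (tmax p)"
    and opt_min: "\<forall>p\<in>followers G. opt_min G p (tmin p)"
    using opt by simp_all
  \<comment> \<open>In (ii) the incentive profile \<gamma> only serves to name the constants g.\<close>
  show ?thesis
    using LP_sat_of_psp_isp[OF arena opt_max] isp_of_LP_sat[OF arena opt_min]
    unfolding Let_def by blast
qed

end
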